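(* If $\mathbf{A}$ is a finite algebra with a Maltsev polynomial, then $\mathbf{A}$ is covered by the set of its $\langle\alpha,\beta\rangle$-minimal sets, where $\langle\alpha,\beta\rangle$ runs over all prime quotients $\alpha\prec\beta$ of the congruence lattice of $\mathbf{A}$.
   Context: A neighborhood of $\mathbf{A}$ is the range of an idempotent unary polynomial ($e(e(x))=e(x)$). For a prime quotient $\alpha\prec\beta$ in $\mathrm{Con}(\mathbf A)$, an $\langle\alpha,\beta\rangle$-minimal set is a set $e(A)$, $e$ a unary polynomial with $e(\beta)\not\subseteq\alpha$, that is minimal under inclusion among such sets (tame congruence theory). If $\mathcal U$ and $\mathcal V$ are sets of neighborhoods of $\mathbf{A}$, then $\mathcal U$ covers $\mathcal V$ if for every $V\in\mathcal V$ there are $U_1,\dots,U_k\in\mathcal U$, idempotent unary polynomials $e_1,\dots,e_k,f$ and polynomials $\lambda,\rho_1,\dots,\rho_k$ of $\mathbf{A}$ with $f(A)=V$, $e_i(A)=U_i$ and $\lambda(e_1\rho_1(x),\dots,e_k\rho_k(x))=f(x)$ for all $x\in A$. $\mathcal U$ covers $\mathbf{A}$ if it covers $\{A\}$. A Maltsev polynomial is a polynomial $m$ with $m(x,y,y)=x=m(y,y,x)$. *)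

theory Defs
  imports Main
begin

text \<open>An algebra is given by a carrier set A and a set F of fundamental operations,
  each a pair (m, f) of an arity m and a function f on lists of length m.\<close>

definition algebra :: "'a set \<Rightarrow> (nat \<times> ('a list \<Rightarrow> 'a)) set \<Rightarrow> bool" where
  "algebra A F \<longleftrightarrow> A \<noteq> {} \<and>
     (\<forall>(m, f) \<in> F. \<forall>xs. length xs = m \<and> set xs \<subseteq> A \<longrightarrow> f xs \<in> A)"

text \<open>n-ary polynomial operations: the clone generated by the fundamental operations
  and all constants of A (functions on lists of length n; only values on A^n matter).\<close>

inductive_set poly :: "'a set \<Rightarrow> (nat \<times> ('a list \<Rightarrow> 'a)) set \<Rightarrow> nat \<Rightarrow> ('a list \<Rightarrow> 'a) set"
  for A F n where
  proj: "i < n \<Longrightarrow> (\<lambda>xs. xs ! i) \<in> poly A F n"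
| const: "c \<in> A \<Longrightarrow> (\<lambda>xs. c) \<in> poly A F n"
| oper: "(m, f) \<in> F \<Longrightarrow> (\<forall>j<m. g j \<in> poly A F n) \<Longrightarrow>
          (\<lambda>xs. f (map (\<lambda>j. g j xs) [0..<m])) \<in> poly A F n"

definition upoly :: "'a set \<Rightarrow> (nat \<times> ('a list \<Rightarrow> 'a)) set \<Rightarrow> ('a \<Rightarrow> 'a) set" where
  "upoly A F = {(\<lambda>x. p [x]) | p. p \<in> poly A F 1}"

definition idempotent_on :: "'a set \<Rightarrow> ('a \<Rightarrow> 'a) \<Rightarrow> bool" where
  "idempotent_on A e \<longleftrightarrow> (\<forall>x\<in>A. e (e x) = e x)"

definition Con :: "'a set \<Rightarrow> (nat \<times> ('a list \<Rightarrow> 'a)) set \<Rightarrow> 'a rel set" where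
  "Con A F = {\<theta>. equiv A \<theta> \<and>
     (\<forall>(m, f) \<in> F. \<forall>xs ys. length xs = m \<and> length ys = m \<and> set xs \<subseteq> A \<and> set ys \<subseteq> A \<and>
        (\<forall>i<m. (xs ! i, ys ! i) \<in> \<theta>) \<longrightarrow> (f xs, f ys) \<in> \<theta>)}"

definition prime_quotient :: "'a set \<Rightarrow> (nat \<times> ('a list \<Rightarrow> 'a)) set \<Rightarrow> 'a rel \<Rightarrow> 'a rel \<Rightarrow> bool" where
  "prime_quotient A F \<alpha> \<beta> \<longleftrightarrow> \<alpha> \<in> Con A F \<and> \<beta> \<in> Con A F \<and> \<alpha> \<subset> \<beta> \<and>
     \<not> (\<exists>\<gamma>\<in>Con A F. \<alpha> \<subset> \<gamma> \<and> \<gamma> \<subset> \<beta>)"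

definition separates :: "('a \<Rightarrow> 'a) \<Rightarrow> 'a rel \<Rightarrow> 'a rel \<Rightarrow> bool" where
  "separates e \<alpha> \<beta> \<longleftrightarrow> \<not> ((\<lambda>(x, y). (e x, e y)) ` \<beta> \<subseteq> \<alpha>)"

definition minimal_sets :: "'a set \<Rightarrow> (nat \<times> ('a list \<Rightarrow> 'a)) set \<Rightarrow> 'a rel \<Rightarrow> 'a rel \<Rightarrow> 'a set set" where
  "minimal_sets A F \<alpha> \<beta> =
     {U. (\<exists>e\<in>upoly A F. separates e \<alpha> \<beta> \<and> U = e ` A) \<and>
         (\<forall>e\<in>upoly A F. separates e \<alpha> \<beta> \<and> e ` A \<subseteq> U \<longrightarrow> e ` A = U)}"

definition covers :: "'a set \<Rightarrow> (nat \<times> ('a list \<Rightarrow> 'a)) set \<Rightarrow> 'a set set \<Rightarrow> 'a set set \<Rightarrow> bool" where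
  "covers A F \<U> \<V> \<longleftrightarrow> (\<forall>V\<in>\<V>. \<exists>k::nat. \<exists>U e \<rho> lam f.
     (\<forall>i<k. U i \<in> \<U> \<and> e i \<in> upoly A F \<and> idempotent_on A (e i) \<and> e i ` A = U i
            \<and> \<rho> i \<in> upoly A F) \<and>
     f \<in> upoly A F \<and> idempotent_on A f \<and> f ` A = V \<and>
     lam \<in> poly A F k \<and>
     (\<forall>x\<in>A. lam (map (\<lambda>i. e i (\<rho> i x)) [0..<k]) = f x))"

definition has_maltsev :: "'a set \<Rightarrow> (nat \<times> ('a list \<Rightarrow> 'a)) set \<Rightarrow> bool" where
  "has_maltsev A F \<longleftrightarrow> (\<exists>m\<in>poly A F 3. \<forall>x\<in>A. \<forall>y\<in>A. m [x, y, y] = x \<and> m [y, y, x] = x)"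

end

theory Submission
  imports Defs "HOL-Library.FuncSet"
begin

text \<open>Going down the congruence lattice one prime quotient \<open>\<alpha> \<prec> \<beta>\<close> at a time, we
  maintain a unary polynomial \<open>g\<close> with \<open>g x \<equiv> x\<close> modulo the current congruence that is a
  polynomial combination of maps \<open>e \<circ> \<rho>\<close>, \<open>e\<close> idempotent onto a minimal set of some prime
  quotient; at the identity congruence \<open>g\<close> is the identity and this is the covering.
  To pass from \<open>\<beta>\<close> to \<open>\<alpha>\<close>, points are repaired one by one. If \<open>(g z, z) \<in> \<beta> - \<alpha>\<close>,
  a minimal set separates this pair, and the Maltsev polynomial \<open>m\<close> makes the congruence
  generated by \<open>\<alpha>\<close> and the separated pair reachable by single unary polynomials \<open>u\<close>; then
  \<open>x \<mapsto> m [g x, u (g z), u (m [g z, g x, x])]\<close> fixes \<open>z\<close> modulo \<open>\<alpha>\<close> and loses none of the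
  closeness of \<open>g\<close> to the identity.\<close>

section \<open>Polynomial operations\<close>

lemma poly_closed:
  assumes alg: "algebra A F"
  shows "p \<in> poly A F n \<Longrightarrow> length xs = n \<Longrightarrow> set xs \<subseteq> A \<Longrightarrow> p xs \<in> A"
proof (induction p rule: poly.induct)
  case (proj i) then show ?case by auto
next
  case (const c) then show ?case by auto
next
  case (oper m f g)
  have "set (map (\<lambda>j. g j xs) [0..<m]) \<subseteq> A" using oper by auto
  moreover have "length (map (\<lambda>j. g j xs) [0..<m]) = m" by simp
  ultimately show ?case using alg oper.hyps(1) unfolding algebra_def by fastforce
qed

lemma poly_subst:
  "p \<in> poly A F n \<Longrightarrow> (\<forall>j<n. q j \<in> poly A F k) \<Longrightarrow>
   (\<lambda>xs. p (map (\<lambda>j. q j xs) [0..<n])) \<in> poly A F k"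
proof (induction p rule: poly.induct)
  case (proj i) then show ?case by simp
next
  case (const c) then show ?case by (simp add: poly.const)
next
  case (oper m f g)
  have "(\<lambda>xs. f (map (\<lambda>j. (\<lambda>xs. g j (map (\<lambda>j. q j xs) [0..<n])) xs) [0..<m])) \<in> poly A F k"
    by (rule poly.oper[OF oper.hyps(1)]) (use oper in auto)
  then show ?case by simp
qed

lemma poly_subst3:
  assumes "p \<in> poly A F 3" "q1 \<in> poly A F k" "q2 \<in> poly A F k" "q3 \<in> poly A F k"
  shows "(\<lambda>xs. p [q1 xs, q2 xs, q3 xs]) \<in> poly A F k"
proof -
  have "(\<lambda>xs. p (map (\<lambda>j. ([q1, q2, q3] ! j) xs) [0..<3])) \<in> poly A F k"
    using assms by (intro poly_subst) (auto simp: less_Suc_eq numeral_3_eq_3)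
  then show ?thesis by (simp add: numeral_3_eq_3 upt_rec)
qed

lemma upolyI: "p \<in> poly A F 1 \<Longrightarrow> u = (\<lambda>x. p [x]) \<Longrightarrow> u \<in> upoly A F"
  unfolding upoly_def by auto

lemma upolyE:
  assumes "u \<in> upoly A F"
  obtains p where "p \<in> poly A F 1" "u = (\<lambda>x. p [x])"
  using assms unfolding upoly_def by auto

lemma upoly_closed: "algebra A F \<Longrightarrow> u \<in> upoly A F \<Longrightarrow> x \<in> A \<Longrightarrow> u x \<in> A"
  by (erule upolyE) (auto intro: poly_closed)

lemma upoly_id: "(\<lambda>x. x) \<in> upoly A F"
  by (rule upolyI[OF poly.proj[of 0]]) auto

lemma upoly_const: "c \<in> A \<Longrightarrow> (\<lambda>x. c) \<in> upoly A F"
  by (rule upolyI[OF poly.const]) auto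

lemma upoly_subst:
  assumes t: "t \<in> poly A F n" and u: "\<forall>j<n. u j \<in> upoly A F"
  shows "(\<lambda>x. t (map (\<lambda>j. u j x) [0..<n])) \<in> upoly A F"
proof -
  have "\<forall>j. \<exists>p. j < n \<longrightarrow> p \<in> poly A F 1 \<and> u j = (\<lambda>x. p [x])"
    using u unfolding upoly_def by auto
  then obtain P where P: "\<And>j. j < n \<Longrightarrow> P j \<in> poly A F 1 \<and> u j = (\<lambda>x. P j [x])"
    by metis
  have "(\<lambda>xs. t (map (\<lambda>j. P j xs) [0..<n])) \<in> poly A F 1"
    using poly_subst[OF t, of P] P by auto
  moreover have "(\<lambda>x. t (map (\<lambda>j. u j x) [0..<n])) = (\<lambda>x. t (map (\<lambda>j. P j [x]) [0..<n]))"
    using P by (auto intro!: ext arg_cong[where f=t])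
  ultimately show ?thesis by (rule upolyI)
qed

lemma upoly_comp: "u \<in> upoly A F \<Longrightarrow> v \<in> upoly A F \<Longrightarrow> (\<lambda>x. u (v x)) \<in> upoly A F"
  by (erule upolyE) (use upoly_subst[of _ A F 1 "\<lambda>_. v"] in auto)

lemma upoly_subst3:
  assumes "p \<in> poly A F 3" "u1 \<in> upoly A F" "u2 \<in> upoly A F" "u3 \<in> upoly A F"
  shows "(\<lambda>x. p [u1 x, u2 x, u3 x]) \<in> upoly A F"
proof -
  have "(\<lambda>x. p (map (\<lambda>j. ([u1, u2, u3] ! j) x) [0..<3])) \<in> upoly A F"
    using assms by (intro upoly_subst) (auto simp: less_Suc_eq numeral_3_eq_3)
  then show ?thesis by (simp add: numeral_3_eq_3 upt_rec)
qed

lemma upoly_funpow: "h \<in> upoly A F \<Longrightarrow> h ^^ n \<in> upoly A F"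
  by (induction n) (auto simp: comp_def upoly_id[unfolded id_def[symmetric]] intro: upoly_comp)

lemma upoly_update:
  assumes f: "(m, f) \<in> F" and xs: "length xs = m" "set xs \<subseteq> A" and i: "i < m"
  shows "(\<lambda>v. f (xs[i := v])) \<in> upoly A F"
proof -
  have "(\<lambda>ys. f (map (\<lambda>j. ys ! j) [0..<m])) \<in> poly A F m"
    by (rule poly.oper[OF f]) (auto intro: poly.proj)
  moreover have "(\<lambda>v. xs[i := v] ! j) \<in> upoly A F" if "j < m" for j
  proof (cases "j = i")
    case True then show ?thesis using i xs(1) by (simp add: upoly_id)
  next
    case False then show ?thesis using that xs by (simp add: upoly_const nth_mem subsetD)
  qed
  ultimately have "(\<lambda>v. (\<lambda>ys. f (map (\<lambda>j. ys ! j) [0..<m])) (map (\<lambda>j. xs[i := v] ! j) [0..<m]))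
      \<in> upoly A F"
    by (intro upoly_subst) auto
  moreover have "map (\<lambda>j. xs[i := v] ! j) [0..<m] = xs[i := v]" for v
    using xs(1) by (metis length_list_update map_nth)
  ultimately show ?thesis by simp
qed

section \<open>Congruences and prime quotients\<close>

lemma Con_equiv: "\<gamma> \<in> Con A F \<Longrightarrow> equiv A \<gamma>"
  unfolding Con_def by auto

lemma Con_subset: "\<gamma> \<in> Con A F \<Longrightarrow> \<gamma> \<subseteq> A \<times> A"
  using Con_equiv equiv_type by blast

lemma Con_refl: "\<gamma> \<in> Con A F \<Longrightarrow> x \<in> A \<Longrightarrow> (x, x) \<in> \<gamma>"
  using Con_equiv equiv_def refl_onD by metis

lemma Con_sym: "\<gamma> \<in> Con A F \<Longrightarrow> (x, y) \<in> \<gamma> \<Longrightarrow> (y, x) \<in> \<gamma>"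
  using Con_equiv equiv_def symD by metis

lemma Con_trans: "\<gamma> \<in> Con A F \<Longrightarrow> (x, y) \<in> \<gamma> \<Longrightarrow> (y, z) \<in> \<gamma> \<Longrightarrow> (x, z) \<in> \<gamma>"
  using Con_equiv equiv_def transD by metis

lemma poly_cong:
  assumes alg: "algebra A F" and \<gamma>: "\<gamma> \<in> Con A F"
  shows "p \<in> poly A F n \<Longrightarrow> length xs = n \<Longrightarrow> length ys = n \<Longrightarrow> set xs \<subseteq> A \<Longrightarrow> set ys \<subseteq> A
    \<Longrightarrow> \<forall>i<n. (xs ! i, ys ! i) \<in> \<gamma> \<Longrightarrow> (p xs, p ys) \<in> \<gamma>"
proof (induction p rule: poly.induct)
  case (proj i) then show ?case by auto
next
  case (const c) then show ?case using Con_refl[OF \<gamma>] by auto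
next
  case (oper m f g)
  let ?as = "map (\<lambda>j. g j xs) [0..<m]" and ?bs = "map (\<lambda>j. g j ys) [0..<m]"
  have "set ?as \<subseteq> A" "set ?bs \<subseteq> A" using oper by (auto intro: poly_closed[OF alg])
  moreover have "\<forall>i<m. (?as ! i, ?bs ! i) \<in> \<gamma>" using oper by auto
  ultimately show ?case using \<gamma> oper.hyps(1) unfolding Con_def by fastforce
qed

lemma upoly_cong:
  assumes alg: "algebra A F" and \<gamma>: "\<gamma> \<in> Con A F" and u: "u \<in> upoly A F" and xy: "(x, y) \<in> \<gamma>"
  shows "(u x, u y) \<in> \<gamma>"
proof -
  obtain p where p: "p \<in> poly A F 1" "u = (\<lambda>x. p [x])" using u by (rule upolyE)
  have "x \<in> A" "y \<in> A" using Con_subset[OF \<gamma>] xy by auto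
  then show ?thesis using poly_cong[OF alg \<gamma> p(1), of "[x]" "[y]"] xy p(2) by auto
qed

lemma poly3_cong:
  assumes alg: "algebra A F" and \<gamma>: "\<gamma> \<in> Con A F" and p: "p \<in> poly A F 3"
    and "(a1, b1) \<in> \<gamma>" "(a2, b2) \<in> \<gamma>" "(a3, b3) \<in> \<gamma>"
  shows "(p [a1, a2, a3], p [b1, b2, b3]) \<in> \<gamma>"
proof -
  have "{a1, a2, a3, b1, b2, b3} \<subseteq> A" using Con_subset[OF \<gamma>] assms(4-6) by auto
  then show ?thesis using poly_cong[OF alg \<gamma> p, of "[a1, a2, a3]" "[b1, b2, b3]"] assms(4-6)
    by (auto simp: less_Suc_eq numeral_3_eq_3)
qed

text \<open>The two tuples are connected by changing one coordinate at a time, and each change is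
  the image of a related pair under a unary polynomial.\<close>

lemma upoly_closed_equiv_compatible:
  assumes alg: "algebra A F" and eq: "equiv A \<theta>"
    and cl: "\<And>u x y. u \<in> upoly A F \<Longrightarrow> (x, y) \<in> \<theta> \<Longrightarrow> (u x, u y) \<in> \<theta>"
    and f: "(m, f) \<in> F" and len: "length xs = m" "length ys = m" and A: "set xs \<subseteq> A" "set ys \<subseteq> A"
    and rel: "\<forall>i<m. (xs ! i, ys ! i) \<in> \<theta>"
  shows "(f xs, f ys) \<in> \<theta>"
proof -
  define zs where "zs j = take j ys @ drop j xs" for j
  have "(f xs, f (zs j)) \<in> \<theta>" if "j \<le> m" for j
    using that
  proof (induction j)
    case 0
    have "f xs \<in> A" using alg f len A unfolding algebra_def by auto
    then show ?case using eq unfolding zs_def by (auto simp: equiv_def intro: refl_onD)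
  next
    case (Suc j)
    then have j: "j < m" by simp
    have zs_len: "length (zs j) = m" and zs_A: "set (zs j) \<subseteq> A"
      unfolding zs_def using len A j by (auto dest: in_set_takeD in_set_dropD)
    have drop_j: "drop j xs = xs ! j # drop (Suc j) xs"
      using len j by (simp add: Cons_nth_drop_Suc)
    have "zs j ! j = xs ! j"
      unfolding zs_def using len j by (simp add: nth_append)
    then have "(zs j)[j := xs ! j] = zs j"
      by (metis list_update_id)
    moreover have "(zs j)[j := ys ! j] = zs (Suc j)"
    proof -
      have "(zs j)[j := ys ! j] = take j ys @ ys ! j # drop (Suc j) xs"
        unfolding zs_def using len j drop_j by (simp add: list_update_append)
      also have "\<dots> = zs (Suc j)"
        unfolding zs_def using len j by (simp add: take_Suc_conv_app_nth)
      finally show ?thesis .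
    qed
    moreover have "(f ((zs j)[j := xs ! j]), f ((zs j)[j := ys ! j])) \<in> \<theta>"
      using cl[OF upoly_update[OF f zs_len zs_A j]] rel j by blast
    ultimately show ?case using Suc eq by (metis Suc_leD equiv_def transD)
  qed
  moreover have "zs m = ys" unfolding zs_def using len by simp
  ultimately show ?thesis by force
qed

lemma upoly_closed_equiv_Con:
  assumes "algebra A F" and "equiv A \<theta>"
    and "\<And>u x y. u \<in> upoly A F \<Longrightarrow> (x, y) \<in> \<theta> \<Longrightarrow> (u x, u y) \<in> \<theta>"
  shows "\<theta> \<in> Con A F"
proof -
  have "(f xs, f ys) \<in> \<theta>"
    if "(m, f) \<in> F" "length xs = m" "length ys = m" "set xs \<subseteq> A" "set ys \<subseteq> A"
      "\<forall>i<m. (xs ! i, ys ! i) \<in> \<theta>" for m f xs ys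
    using upoly_closed_equiv_compatible[OF assms(1,2) _ that] assms(3) by blast
  then show ?thesis unfolding Con_def using assms(2) by auto
qed

lemma Con_full: "algebra A F \<Longrightarrow> A \<times> A \<in> Con A F"
  by (rule upoly_closed_equiv_Con) (auto simp: equiv_def refl_on_def sym_def trans_def intro: upoly_closed)

lemma Con_Id_on: "algebra A F \<Longrightarrow> Id_on A \<in> Con A F"
  by (rule upoly_closed_equiv_Con) (auto simp: equiv_def refl_on_def sym_def trans_def intro: upoly_closed)

lemma Con_Int:
  assumes alg: "algebra A F" and \<gamma>: "\<gamma> \<in> Con A F" and \<delta>: "\<delta> \<in> Con A F"
  shows "\<gamma> \<inter> \<delta> \<in> Con A F"
proof (rule upoly_closed_equiv_Con[OF alg])
  have "equiv A \<gamma>" "equiv A \<delta>" using Con_equiv \<gamma> \<delta> by auto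
  then show "equiv A (\<gamma> \<inter> \<delta>)"
    unfolding equiv_def using refl_on_Int[of A \<gamma> A \<delta>] sym_Int trans_Int by auto
qed (auto intro: upoly_cong[OF alg \<gamma>] upoly_cong[OF alg \<delta>])

lemma prime_quotient_Con:
  assumes "prime_quotient A F \<alpha> \<beta>"
  shows "\<alpha> \<in> Con A F" "\<beta> \<in> Con A F" "\<alpha> \<subset> \<beta>"
  using assms unfolding prime_quotient_def by auto

lemma prime_quotient_le_if_pair:
  assumes alg: "algebra A F" and pq: "prime_quotient A F \<alpha> \<beta>"
    and \<gamma>: "\<gamma> \<in> Con A F" "\<alpha> \<subseteq> \<gamma>" and cd: "(c, d) \<in> \<gamma>" "(c, d) \<in> \<beta>" "(c, d) \<notin> \<alpha>"
  shows "\<beta> \<subseteq> \<gamma>"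
proof -
  have "\<gamma> \<inter> \<beta> \<in> Con A F" using Con_Int[OF alg \<gamma>(1)] prime_quotient_Con[OF pq] by blast
  moreover have "\<alpha> \<subset> \<gamma> \<inter> \<beta>" using \<gamma>(2) cd prime_quotient_Con(3)[OF pq] by blast
  ultimately have "\<gamma> \<inter> \<beta> = \<beta>" using pq unfolding prime_quotient_def by blast
  then show ?thesis by blast
qed

lemma Con_has_prime_quotient_above:
  assumes alg: "algebra A F" and fin: "finite A" and \<gamma>: "\<gamma> \<in> Con A F" "\<gamma> \<noteq> A \<times> A"
  obtains \<beta> where "prime_quotient A F \<gamma> \<beta>"
proof -
  let ?C = "{\<delta> \<in> Con A F. \<gamma> \<subset> \<delta>}"
  have "A \<times> A \<in> ?C" using Con_full[OF alg] Con_subset[OF \<gamma>(1)] \<gamma>(2) by blast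
  from ex_has_least_nat[of "\<lambda>\<delta>. \<delta> \<in> ?C", OF this, of card]
  obtain \<beta> where \<beta>: "\<beta> \<in> ?C" and least: "\<And>\<delta>. \<delta> \<in> ?C \<Longrightarrow> card \<beta> \<le> card \<delta>"
    by blast
  have fin_\<beta>: "finite \<beta>" using Con_subset[of \<beta> A F] \<beta> fin by (auto intro: finite_subset)
  have no_between: "\<not> (\<delta> \<in> Con A F \<and> \<gamma> \<subset> \<delta> \<and> \<delta> \<subset> \<beta>)" for \<delta>
  proof
    assume \<delta>: "\<delta> \<in> Con A F \<and> \<gamma> \<subset> \<delta> \<and> \<delta> \<subset> \<beta>"
    then have "card \<delta> < card \<beta>" by (intro psubset_card_mono[OF fin_\<beta>]) blast
    moreover have "card \<beta> \<le> card \<delta>" using least \<delta> by blast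
    ultimately show False by simp
  qed
  have "prime_quotient A F \<gamma> \<beta>"
    unfolding prime_quotient_def using \<beta> \<gamma>(1) no_between by (intro conjI) blast+
  then show ?thesis by (rule that)
qed

text \<open>The pairs that no unary polynomial followed by \<open>e\<close> separates modulo \<open>\<alpha>\<close> form a
  congruence above \<open>\<alpha>\<close>; by primeness it contains \<open>\<beta>\<close> as soon as it contains one pair
  of \<open>\<beta> - \<alpha>\<close>, which would contradict that \<open>e\<close> separates.\<close>

lemma separates_prime_quotient_pair:
  assumes alg: "algebra A F" and pq: "prime_quotient A F \<alpha> \<beta>"
    and e: "e \<in> upoly A F" "separates e \<alpha> \<beta>" and cd: "(c, d) \<in> \<beta>" "(c, d) \<notin> \<alpha>"
  obtains t where "t \<in> upoly A F" "(e (t c), e (t d)) \<notin> \<alpha>"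
proof -
  have \<alpha>: "\<alpha> \<in> Con A F" and \<beta>: "\<beta> \<in> Con A F" using prime_quotient_Con[OF pq] by auto
  define \<theta> where "\<theta> = {(x, y). x \<in> A \<and> y \<in> A \<and> (\<forall>t\<in>upoly A F. (e (t x), e (t y)) \<in> \<alpha>)}"
  have "equiv A \<theta>"
  proof (rule equivI)
    show "refl_on A \<theta>"
      using Con_refl[OF \<alpha>] upoly_closed[OF alg] e(1) unfolding \<theta>_def refl_on_def by auto
    show "sym \<theta>" using Con_sym[OF \<alpha>] unfolding \<theta>_def sym_def by auto
    show "trans \<theta>" using Con_trans[OF \<alpha>] unfolding \<theta>_def trans_def by blast
  qed (auto simp: \<theta>_def)
  moreover have "(u x, u y) \<in> \<theta>" if "u \<in> upoly A F" "(x, y) \<in> \<theta>" for u x y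
    using that upoly_closed[OF alg] upoly_comp[of _ A F u] unfolding \<theta>_def by auto
  ultimately have \<theta>: "\<theta> \<in> Con A F" by (rule upoly_closed_equiv_Con[OF alg])
  have "\<alpha> \<subseteq> \<theta>"
  proof (clarify)
    fix x y assume xy: "(x, y) \<in> \<alpha>"
    have "(e (t x), e (t y)) \<in> \<alpha>" if "t \<in> upoly A F" for t
      using upoly_cong[OF alg \<alpha> upoly_comp[OF e(1) that] xy] .
    then show "(x, y) \<in> \<theta>" using Con_subset[OF \<alpha>] xy unfolding \<theta>_def by auto
  qed
  show ?thesis
  proof (rule ccontr)
    assume "\<not> ?thesis"
    then have "(c, d) \<in> \<theta>" using Con_subset[OF \<beta>] cd(1) that unfolding \<theta>_def by blast
    then have "\<beta> \<subseteq> \<theta>" by (rule prime_quotient_le_if_pair[OF alg pq \<theta> \<open>\<alpha> \<subseteq> \<theta>\<close> _ cd])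
    then have "(\<lambda>(x, y). (e x, e y)) ` \<beta> \<subseteq> \<alpha>" using upoly_id unfolding \<theta>_def by fastforce
    then show False using e(2) unfolding separates_def by blast
  qed
qed

section \<open>Minimal sets\<close>

lemma minimal_set_exists:
  assumes fin: "finite A" and "\<not> \<beta> \<subseteq> \<alpha>"
  obtains e where "e \<in> upoly A F" "separates e \<alpha> \<beta>" "e ` A \<in> minimal_sets A F \<alpha> \<beta>"
proof -
  have "(\<lambda>x. x) \<in> upoly A F \<and> separates (\<lambda>x. x) \<alpha> \<beta>"
    using upoly_id assms(2) unfolding separates_def by auto
  from ex_has_least_nat[of "\<lambda>e. e \<in> upoly A F \<and> separates e \<alpha> \<beta>", OF this, of "\<lambda>e. card (e ` A)"]
  obtain e where e: "e \<in> upoly A F" "separates e \<alpha> \<beta>"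
    and least: "\<And>e'. e' \<in> upoly A F \<Longrightarrow> separates e' \<alpha> \<beta> \<Longrightarrow> card (e ` A) \<le> card (e' ` A)"
    by blast
  have "e' ` A = e ` A" if "e' \<in> upoly A F" "separates e' \<alpha> \<beta>" "e' ` A \<subseteq> e ` A" for e'
  proof (rule card_subset_eq)
    show "finite (e ` A)" using fin by simp
    then show "card (e' ` A) = card (e ` A)"
      using card_mono[OF _ that(3)] least[OF that(1,2)] by simp
  qed (fact that(3))
  then have "e ` A \<in> minimal_sets A F \<alpha> \<beta>" unfolding minimal_sets_def using e by blast
  with e show ?thesis by (rule that)
qed

lemma finite_image_eq_funpow_id:
  assumes fin: "finite U" and h: "h ` U = U"
  obtains n where "n > 0" "\<And>u. u \<in> U \<Longrightarrow> (h ^^ n) u = u"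
proof -
  have img: "(h ^^ i) ` U = U" for i
    by (induction i) (simp_all, metis h image_image)
  have inj: "inj_on (h ^^ i) U" for i
  proof (induction i)
    case (Suc i)
    have "inj_on h U" using finite_surj_inj[OF fin] h by simp
    then have "inj_on (h \<circ> h ^^ i) U" using comp_inj_on[OF Suc.IH] img[of i] by simp
    then show ?case by (simp add: comp_def)
  qed simp
  define R where "R i = restrict (h ^^ i) U" for i
  have into: "(h ^^ i) u \<in> U" if "u \<in> U" for i u
    using imageI[OF that, of "h ^^ i"] img[of i] by simp
  then have "range R \<subseteq> U \<rightarrow>\<^sub>E U" unfolding R_def by auto
  then have "finite (range R)" by (rule finite_subset) (simp add: finite_PiE fin)
  then have "\<not> inj R" using finite_imageD infinite_UNIV_nat by blast
  then obtain i j where "i \<noteq> j" "R i = R j" unfolding inj_def by blast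
  then obtain a b where ab: "a < b" "R a = R b" by (metis linorder_neq_iff)
  show ?thesis
  proof
    show "0 < b - a" using ab(1) by simp
    fix u assume u: "u \<in> U"
    have "(h ^^ a) ((h ^^ (b - a)) u) = (h ^^ b) u"
      using ab(1) funpow_add[of a "b - a" h] by simp
    also have "\<dots> = (h ^^ a) u" using ab(2) u unfolding R_def by (metis restrict_apply')
    finally have "(h ^^ a) ((h ^^ (b - a)) u) = (h ^^ a) u" .
    then show "(h ^^ (b - a)) u = u" using inj[of a] into u by (meson inj_on_def)
  qed
qed

text \<open>Composing a separating map onto a minimal set \<open>U\<close> with a suitable unary polynomial
  gives a separating map permuting \<open>U\<close>; a power of it is the identity on \<open>U\<close>.\<close>

lemma minimal_set_idempotent:
  assumes alg: "algebra A F" and fin: "finite A" and pq: "prime_quotient A F \<alpha> \<beta>"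
    and e: "e \<in> upoly A F" "separates e \<alpha> \<beta>" "e ` A \<in> minimal_sets A F \<alpha> \<beta>"
  obtains k where "k \<in> upoly A F" "idempotent_on A k" "separates k \<alpha> \<beta>" "k ` A = e ` A"
proof -
  let ?U = "e ` A"
  have minimal: "e' ` A = ?U" if "e' \<in> upoly A F" "separates e' \<alpha> \<beta>" "e' ` A \<subseteq> ?U" for e'
    using e(3) that unfolding minimal_sets_def by blast
  obtain x y where xy: "(x, y) \<in> \<beta>" "(e x, e y) \<notin> \<alpha>"
    using e(2) unfolding separates_def by auto
  have \<beta>: "\<beta> \<in> Con A F" using prime_quotient_Con[OF pq] by blast
  have exy: "(e x, e y) \<in> \<beta>" using upoly_cong[OF alg \<beta> e(1) xy(1)] .
  obtain t where t: "t \<in> upoly A F" "(e (t (e x)), e (t (e y))) \<notin> \<alpha>"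
    using separates_prime_quotient_pair[OF alg pq e(1,2) exy xy(2)] by blast
  define h where "h z = e (t z)" for z
  have h: "h \<in> upoly A F" unfolding h_def using upoly_comp[OF e(1) t(1)] .
  have "separates (\<lambda>z. h (e z)) \<alpha> \<beta>" unfolding separates_def h_def using xy(1) t(2) by force
  moreover have "(\<lambda>z. h (e z)) ` A \<subseteq> ?U"
    unfolding h_def using upoly_closed[OF alg t(1)] upoly_closed[OF alg e(1)] by auto
  ultimately have "(\<lambda>z. h (e z)) ` A = ?U" using minimal upoly_comp[OF h e(1)] by blast
  then have "h ` ?U = ?U" by (simp add: image_image)
  then obtain n where n: "n > 0" "\<And>u. u \<in> ?U \<Longrightarrow> (h ^^ n) u = u"
    using finite_image_eq_funpow_id[OF finite_imageI[OF fin]] by blast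
  have into: "(h ^^ n) z \<in> ?U" if "z \<in> A" for z
  proof -
    obtain n' where "n = Suc n'" using n(1) by (cases n) auto
    then show ?thesis
      unfolding h_def using upoly_closed[OF alg upoly_funpow[OF h] that] upoly_closed[OF alg t(1)]
      by (auto simp: h_def[abs_def])
  qed
  have "idempotent_on A (h ^^ n)" unfolding idempotent_on_def using into n(2) by auto
  moreover have "(h ^^ n) ` A = ?U"
  proof
    show "(h ^^ n) ` A \<subseteq> ?U" using into by blast
    show "?U \<subseteq> (h ^^ n) ` A"
    proof (rule image_subsetI)
      fix z assume "z \<in> A"
      then have "e z = (h ^^ n) (e z)" "e z \<in> A" using n(2) upoly_closed[OF alg e(1)] by auto
      then show "e z \<in> (h ^^ n) ` A" by (rule image_eqI)
    qed
  qed
  moreover have "x \<in> A" "y \<in> A" using Con_subset[OF \<beta>] xy(1) by auto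
  then have "separates (h ^^ n) \<alpha> \<beta>"
    unfolding separates_def using exy xy(2) n(2) by force
  ultimately show ?thesis using upoly_funpow[OF h] that by blast
qed

lemma prime_quotient_minimal_idempotent:
  assumes alg: "algebra A F" and fin: "finite A" and pq: "prime_quotient A F \<alpha> \<beta>"
  obtains e where "e \<in> upoly A F" "idempotent_on A e" "separates e \<alpha> \<beta>"
    "e ` A \<in> minimal_sets A F \<alpha> \<beta>"
proof -
  have "\<not> \<beta> \<subseteq> \<alpha>" using prime_quotient_Con(3)[OF pq] by blast
  then obtain e where "e \<in> upoly A F" "separates e \<alpha> \<beta>" "e ` A \<in> minimal_sets A F \<alpha> \<beta>"
    using minimal_set_exists[OF fin] by blast
  then show ?thesis using minimal_set_idempotent[OF alg fin pq] that by metis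
qed

section \<open>Polynomial combinations of neighbourhood maps\<close>

definition poly_comb ::
    "'a set \<Rightarrow> (nat \<times> ('a list \<Rightarrow> 'a)) set \<Rightarrow> ('a \<Rightarrow> 'a) list \<Rightarrow> ('a \<Rightarrow> 'a) \<Rightarrow> bool" where
  "poly_comb A F bs g \<longleftrightarrow> (\<exists>t\<in>poly A F (length bs). \<forall>x\<in>A. t (map (\<lambda>b. b x) bs) = g x)"

definition poly_generated ::
    "'a set \<Rightarrow> (nat \<times> ('a list \<Rightarrow> 'a)) set \<Rightarrow> ('a \<Rightarrow> 'a) set \<Rightarrow> ('a \<Rightarrow> 'a) \<Rightarrow> bool" where
  "poly_generated A F B g \<longleftrightarrow> (\<exists>bs. set bs \<subseteq> B \<and> poly_comb A F bs g)"

lemma poly_comb_append_left: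
  assumes "poly_comb A F bs g"
  shows "poly_comb A F (bs @ cs) g"
proof -
  obtain t where t: "t \<in> poly A F (length bs)" "\<And>x. x \<in> A \<Longrightarrow> t (map (\<lambda>b. b x) bs) = g x"
    using assms unfolding poly_comb_def by blast
  let ?t = "\<lambda>xs. t (map (\<lambda>j. xs ! j) [0..<length bs])"
  have "?t \<in> poly A F (length (bs @ cs))" by (rule poly_subst[OF t(1)]) (auto intro: poly.proj)
  moreover have "map (\<lambda>j. map (\<lambda>b. b x) (bs @ cs) ! j) [0..<length bs] = map (\<lambda>b. b x) bs" for x
    by (rule nth_equalityI) (auto simp: nth_append)
  ultimately show ?thesis unfolding poly_comb_def using t(2) by (intro bexI[of _ ?t]) auto
qed

lemma poly_comb_append_right:
  assumes "poly_comb A F bs g"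
  shows "poly_comb A F (cs @ bs) g"
proof -
  obtain t where t: "t \<in> poly A F (length bs)" "\<And>x. x \<in> A \<Longrightarrow> t (map (\<lambda>b. b x) bs) = g x"
    using assms unfolding poly_comb_def by blast
  let ?t = "\<lambda>xs. t (map (\<lambda>j. xs ! (length cs + j)) [0..<length bs])"
  have "?t \<in> poly A F (length (cs @ bs))" by (rule poly_subst[OF t(1)]) (auto intro: poly.proj)
  moreover have "map (\<lambda>j. map (\<lambda>b. b x) (cs @ bs) ! (length cs + j)) [0..<length bs] = map (\<lambda>b. b x) bs" for x
    by (rule nth_equalityI) (auto simp: nth_append)
  ultimately show ?thesis unfolding poly_comb_def using t(2) by (intro bexI[of _ ?t]) auto
qed

lemma poly_comb_subst3:
  assumes p: "p \<in> poly A F 3" and "poly_comb A F bs g1" "poly_comb A F bs g2" "poly_comb A F bs g3"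
  shows "poly_comb A F bs (\<lambda>x. p [g1 x, g2 x, g3 x])"
proof -
  obtain t1 t2 t3 where t: "t1 \<in> poly A F (length bs)" "t2 \<in> poly A F (length bs)" "t3 \<in> poly A F (length bs)"
    "\<And>x. x \<in> A \<Longrightarrow> t1 (map (\<lambda>b. b x) bs) = g1 x"
    "\<And>x. x \<in> A \<Longrightarrow> t2 (map (\<lambda>b. b x) bs) = g2 x"
    "\<And>x. x \<in> A \<Longrightarrow> t3 (map (\<lambda>b. b x) bs) = g3 x"
    using assms(2-4) unfolding poly_comb_def by meson
  have "(\<lambda>xs. p [t1 xs, t2 xs, t3 xs]) \<in> poly A F (length bs)" by (rule poly_subst3[OF p t(1-3)])
  then show ?thesis unfolding poly_comb_def using t(4-6) by (intro bexI) auto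
qed

lemma poly_comb_upoly:
  assumes "poly_comb A F bs g" and "u \<in> upoly A F"
  shows "poly_comb A F bs (\<lambda>x. u (g x))"
proof -
  obtain t where t: "t \<in> poly A F (length bs)" "\<And>x. x \<in> A \<Longrightarrow> t (map (\<lambda>b. b x) bs) = g x"
    using assms(1) unfolding poly_comb_def by blast
  obtain p where p: "p \<in> poly A F 1" "u = (\<lambda>x. p [x])" using assms(2) by (rule upolyE)
  have "(\<lambda>xs. p (map (\<lambda>j. t xs) [0..<1])) \<in> poly A F (length bs)"
    by (rule poly_subst[OF p(1)]) (use t(1) in auto)
  then show ?thesis unfolding poly_comb_def using t(2) p(2) by (intro bexI) auto
qed

lemma poly_generated_const: "c \<in> A \<Longrightarrow> poly_generated A F B (\<lambda>x. c)"
  unfolding poly_generated_def poly_comb_def by (auto intro!: exI[of _ "[]"] poly.const)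

lemma poly_generated_basic: "b \<in> B \<Longrightarrow> poly_generated A F B b"
  unfolding poly_generated_def poly_comb_def
  by (auto intro!: exI[of _ "[b]"] bexI[of _ "\<lambda>xs. xs ! 0"] poly.proj)

lemma poly_generated_upoly:
  "poly_generated A F B g \<Longrightarrow> u \<in> upoly A F \<Longrightarrow> poly_generated A F B (\<lambda>x. u (g x))"
  unfolding poly_generated_def using poly_comb_upoly by blast

lemma poly_generated_subst3:
  assumes p: "p \<in> poly A F 3"
    and "poly_generated A F B g1" "poly_generated A F B g2" "poly_generated A F B g3"
  shows "poly_generated A F B (\<lambda>x. p [g1 x, g2 x, g3 x])"
proof -
  obtain bs1 bs2 bs3 where bs: "set bs1 \<subseteq> B" "set bs2 \<subseteq> B" "set bs3 \<subseteq> B"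
    and g: "poly_comb A F bs1 g1" "poly_comb A F bs2 g2" "poly_comb A F bs3 g3"
    using assms(2-4) unfolding poly_generated_def by blast
  have "poly_comb A F (bs1 @ bs2 @ bs3) (\<lambda>x. p [g1 x, g2 x, g3 x])"
    using g by (intro poly_comb_subst3[OF p]) (auto intro: poly_comb_append_left poly_comb_append_right)
  then show ?thesis unfolding poly_generated_def using bs by (intro exI[of _ "bs1 @ bs2 @ bs3"]) auto
qed

definition nbhd_maps :: "'a set \<Rightarrow> (nat \<times> ('a list \<Rightarrow> 'a)) set \<Rightarrow> 'a set set \<Rightarrow> ('a \<Rightarrow> 'a) set" where
  "nbhd_maps A F \<U> = {\<lambda>x. e (\<rho> x) | e \<rho>.
     e \<in> upoly A F \<and> idempotent_on A e \<and> e ` A \<in> \<U> \<and> \<rho> \<in> upoly A F}"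

lemma covers_if_poly_generated_id:
  assumes "poly_generated A F (nbhd_maps A F \<U>) g" and "\<forall>x\<in>A. g x = x"
  shows "covers A F \<U> {A}"
proof -
  obtain bs t where bs: "set bs \<subseteq> nbhd_maps A F \<U>" and t: "t \<in> poly A F (length bs)"
    "\<And>x. x \<in> A \<Longrightarrow> t (map (\<lambda>b. b x) bs) = g x"
    using assms(1) unfolding poly_generated_def poly_comb_def by blast
  have "\<forall>i. \<exists>e \<rho>. i < length bs \<longrightarrow> bs ! i = (\<lambda>x. e (\<rho> x)) \<and> e \<in> upoly A F \<and>
      idempotent_on A e \<and> e ` A \<in> \<U> \<and> \<rho> \<in> upoly A F"
    using bs nth_mem unfolding nbhd_maps_def by blast
  then obtain e \<rho> where e\<rho>: "\<And>i. i < length bs \<Longrightarrow> bs ! i = (\<lambda>x. e i (\<rho> i x)) \<and> e i \<in> upoly A F \<and>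
      idempotent_on A (e i) \<and> e i ` A \<in> \<U> \<and> \<rho> i \<in> upoly A F"
    by metis
  have "map (\<lambda>i. e i (\<rho> i x)) [0..<length bs] = map (\<lambda>b. b x) bs" for x
    by (rule nth_equalityI) (simp_all add: e\<rho>)
  then show ?thesis unfolding covers_def
    by (intro ballI exI[of _ "length bs"] exI[of _ "\<lambda>i. e i ` A"] exI[of _ e] exI[of _ \<rho>]
        exI[of _ t] exI[of _ "\<lambda>x. x"])
      (use e\<rho> t upoly_id assms(2) in \<open>auto simp: idempotent_on_def\<close>)
qed

definition prime_minimal_sets :: "'a set \<Rightarrow> (nat \<times> ('a list \<Rightarrow> 'a)) set \<Rightarrow> 'a set set" where
  "prime_minimal_sets A F = \<Union>{minimal_sets A F \<alpha> \<beta> | \<alpha> \<beta>. prime_quotient A F \<alpha> \<beta>}"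

section \<open>Algebras with a Maltsev polynomial\<close>

definition poly_linked :: "'a set \<Rightarrow> (nat \<times> ('a list \<Rightarrow> 'a)) set \<Rightarrow> 'a rel \<Rightarrow> 'a \<Rightarrow> 'a \<Rightarrow> 'a rel" where
  "poly_linked A F \<alpha> c d =
     {(x, y). x \<in> A \<and> y \<in> A \<and> (\<exists>p\<in>upoly A F. (x, p c) \<in> \<alpha> \<and> (p d, y) \<in> \<alpha>)}"

lemma Con_subset_poly_linked:
  assumes "\<alpha> \<in> Con A F"
  shows "\<alpha> \<subseteq> poly_linked A F \<alpha> c d"
proof clarify
  fix x y assume xy: "(x, y) \<in> \<alpha>"
  then have "x \<in> A" "y \<in> A" using Con_subset[OF assms] by auto
  then show "(x, y) \<in> poly_linked A F \<alpha> c d"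
    unfolding poly_linked_def using xy Con_refl[OF assms]
    by (auto intro!: bexI[of _ "\<lambda>_. x"] upoly_const)
qed

lemma pair_in_poly_linked:
  assumes "\<alpha> \<in> Con A F" and "c \<in> A" "d \<in> A"
  shows "(c, d) \<in> poly_linked A F \<alpha> c d"
  unfolding poly_linked_def using assms Con_refl[OF assms(1)]
  by (auto intro!: bexI[of _ "\<lambda>x. x"] upoly_id)

locale maltsev_algebra =
  fixes A :: "'a set" and F :: "(nat \<times> ('a list \<Rightarrow> 'a)) set" and m :: "'a list \<Rightarrow> 'a"
  assumes algebra: "algebra A F" and maltsev_poly: "m \<in> poly A F 3"
    and maltsev_left: "\<And>x y. x \<in> A \<Longrightarrow> y \<in> A \<Longrightarrow> m [x, y, y] = x"
    and maltsev_right: "\<And>x y. x \<in> A \<Longrightarrow> y \<in> A \<Longrightarrow> m [y, y, x] = x"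
begin

text \<open>With a Maltsev polynomial the relation \<open>poly_linked A F \<alpha> c d\<close> is already a congruence,
  so it is the join of \<open>\<alpha>\<close> with the principal congruence of \<open>(c, d)\<close>.\<close>

lemma poly_linked_sym:
  assumes \<alpha>: "\<alpha> \<in> Con A F" and cd: "c \<in> A" "d \<in> A" and xy: "(x, y) \<in> poly_linked A F \<alpha> c d"
  shows "(y, x) \<in> poly_linked A F \<alpha> c d"
proof -
  obtain p where p: "p \<in> upoly A F" "(x, p c) \<in> \<alpha>" "(p d, y) \<in> \<alpha>" and "x \<in> A" "y \<in> A"
    using xy unfolding poly_linked_def by blast
  have pcd: "p c \<in> A" "p d \<in> A" using upoly_closed[OF algebra p(1)] cd by auto
  define p' where "p' u = m [p c, p u, p d]" for u
  have "p' \<in> upoly A F"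
    unfolding p'_def by (rule upoly_subst3[OF maltsev_poly upoly_const p(1) upoly_const]) (use pcd in auto)
  moreover have "p' c = p d" "p' d = p c" unfolding p'_def using pcd maltsev_left maltsev_right by auto
  ultimately show ?thesis
    unfolding poly_linked_def using p Con_sym[OF \<alpha>] \<open>x \<in> A\<close> \<open>y \<in> A\<close> by (auto intro!: bexI[of _ p'])
qed

lemma poly_linked_trans:
  assumes \<alpha>: "\<alpha> \<in> Con A F" and cd: "c \<in> A" "d \<in> A"
    and "(x, y) \<in> poly_linked A F \<alpha> c d" "(y, z) \<in> poly_linked A F \<alpha> c d"
  shows "(x, z) \<in> poly_linked A F \<alpha> c d"
proof -
  obtain p q where p: "p \<in> upoly A F" "(x, p c) \<in> \<alpha>" "(p d, y) \<in> \<alpha>"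
    and q: "q \<in> upoly A F" "(y, q c) \<in> \<alpha>" "(q d, z) \<in> \<alpha>" and "x \<in> A" "z \<in> A"
    using assms(4,5) unfolding poly_linked_def by blast
  have A: "p c \<in> A" "q c \<in> A" "q d \<in> A" using upoly_closed[OF algebra] p(1) q(1) cd by auto
  define r where "r u = m [p u, q c, q u]" for u
  have "r \<in> upoly A F"
    unfolding r_def by (rule upoly_subst3[OF maltsev_poly p(1) upoly_const q(1)]) (use A in auto)
  moreover have "r c = p c" unfolding r_def using A maltsev_left by auto
  moreover have "(r d, z) \<in> \<alpha>"
  proof -
    have "(p d, q c) \<in> \<alpha>" using p(3) q(2) Con_trans[OF \<alpha>] by blast
    then have "(r d, m [q c, q c, q d]) \<in> \<alpha>"
      unfolding r_def using poly3_cong[OF algebra \<alpha> maltsev_poly] Con_refl[OF \<alpha>] A by blast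
    then show ?thesis using maltsev_right[OF A(3,2)] q(3) Con_trans[OF \<alpha>] by auto
  qed
  ultimately show ?thesis
    unfolding poly_linked_def using p \<open>x \<in> A\<close> \<open>z \<in> A\<close> by (auto intro!: bexI[of _ r])
qed

lemma poly_linked_Con:
  assumes \<alpha>: "\<alpha> \<in> Con A F" and cd: "c \<in> A" "d \<in> A"
  shows "poly_linked A F \<alpha> c d \<in> Con A F"
proof (rule upoly_closed_equiv_Con[OF algebra])
  show "equiv A (poly_linked A F \<alpha> c d)"
  proof (rule equivI)
    show "refl_on A (poly_linked A F \<alpha> c d)"
      by (rule refl_onI) (use Con_subset_poly_linked[OF \<alpha>] Con_refl[OF \<alpha>] in blast)
    show "sym (poly_linked A F \<alpha> c d)" by (rule symI) (rule poly_linked_sym[OF assms])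
    show "trans (poly_linked A F \<alpha> c d)" by (rule transI) (rule poly_linked_trans[OF assms])
  qed (auto simp: poly_linked_def)
next
  fix u x y assume u: "u \<in> upoly A F" and "(x, y) \<in> poly_linked A F \<alpha> c d"
  then obtain p where p: "p \<in> upoly A F" "(x, p c) \<in> \<alpha>" "(p d, y) \<in> \<alpha>" and "x \<in> A" "y \<in> A"
    unfolding poly_linked_def by blast
  then show "(u x, u y) \<in> poly_linked A F \<alpha> c d"
    unfolding poly_linked_def using upoly_comp[OF u p(1)] upoly_cong[OF algebra \<alpha> u]
      upoly_closed[OF algebra u] by (auto intro!: bexI[of _ "\<lambda>z. u (p z)"])
qed

lemma prime_quotient_poly_linked:
  assumes pq: "prime_quotient A F \<alpha> \<beta>" and cd: "(c, d) \<in> \<beta>" "(c, d) \<notin> \<alpha>" and xy: "(x, y) \<in> \<beta>"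
  obtains p where "p \<in> upoly A F" "(x, p c) \<in> \<alpha>" "(p d, y) \<in> \<alpha>"
proof -
  have \<alpha>: "\<alpha> \<in> Con A F" and "c \<in> A" "d \<in> A"
    using prime_quotient_Con[OF pq] Con_subset[of \<beta> A F] cd(1) by auto
  then have "\<beta> \<subseteq> poly_linked A F \<alpha> c d"
    using prime_quotient_le_if_pair[OF algebra pq poly_linked_Con Con_subset_poly_linked
        pair_in_poly_linked cd] by blast
  then show ?thesis using xy that unfolding poly_linked_def by blast
qed

text \<open>The correction term \<open>m [y, u a, u (m [a, y, x])]\<close> used below: it stays as close to
  \<open>x\<close> as \<open>y\<close> is, for every congruence, and at \<open>y = a\<close> it moves \<open>z\<close> to \<open>m [a, u a, u z]\<close>.\<close>

lemma maltsev_correction_cong: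
  assumes \<gamma>: "\<gamma> \<in> Con A F" and u: "u \<in> upoly A F" and a: "a \<in> A" and x: "x \<in> A"
    and yx: "(y, x) \<in> \<gamma>"
  shows "(m [y, u a, u (m [a, y, x])], x) \<in> \<gamma>"
proof -
  have y: "y \<in> A" using Con_subset[OF \<gamma>] yx by auto
  have ua: "u a \<in> A" using upoly_closed[OF algebra u a] .
  have "(m [a, y, x], m [a, x, x]) \<in> \<gamma>"
    by (rule poly3_cong[OF algebra \<gamma> maltsev_poly Con_refl[OF \<gamma> a] yx Con_refl[OF \<gamma> x]])
  then have "(u (m [a, y, x]), u a) \<in> \<gamma>"
    using upoly_cong[OF algebra \<gamma> u] maltsev_left[OF a x] by simp
  then have "(m [y, u a, u (m [a, y, x])], m [y, u a, u a]) \<in> \<gamma>"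
    by (rule poly3_cong[OF algebra \<gamma> maltsev_poly Con_refl[OF \<gamma> y] Con_refl[OF \<gamma> ua]])
  then show ?thesis using maltsev_left[OF y ua] yx Con_trans[OF \<gamma>] by auto
qed

lemma maltsev_correction_fixes:
  assumes \<alpha>: "\<alpha> \<in> Con A F" and z: "z \<in> A" and a: "(a, u a) \<in> \<alpha>" and uz: "(u z, z) \<in> \<alpha>"
  shows "(m [a, u a, u (m [a, a, z])], z) \<in> \<alpha>"
proof -
  have a_A: "a \<in> A" using Con_subset[OF \<alpha>] a by auto
  have "(m [a, u a, u z], m [a, a, z]) \<in> \<alpha>"
    by (rule poly3_cong[OF algebra \<alpha> maltsev_poly Con_refl[OF \<alpha> a_A] Con_sym[OF \<alpha> a] uz])
  then show ?thesis using maltsev_right[OF z a_A] by simp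
qed

text \<open>If \<open>g\<close> moves \<open>z\<close> out of its \<open>\<alpha>\<close>-class, the pair \<open>(g z, z)\<close> is separated by a
  minimal set, and \<open>prime_quotient_poly_linked\<close> provides the \<open>u\<close> for the correction term.\<close>

lemma prime_quotient_correct_point:
  assumes fin: "finite A" and pq: "prime_quotient A F \<alpha> \<beta>"
    and g: "g \<in> upoly A F" "poly_generated A F (nbhd_maps A F (prime_minimal_sets A F)) g"
    and g_\<beta>: "\<forall>x\<in>A. (g x, x) \<in> \<beta>" and z: "z \<in> A"
  obtains g' where "g' \<in> upoly A F" "poly_generated A F (nbhd_maps A F (prime_minimal_sets A F)) g'"
    "\<And>\<gamma> x. \<gamma> \<in> Con A F \<Longrightarrow> x \<in> A \<Longrightarrow> (g x, x) \<in> \<gamma> \<Longrightarrow> (g' x, x) \<in> \<gamma>" "(g' z, z) \<in> \<alpha>"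
proof (cases "(g z, z) \<in> \<alpha>")
  case True
  then show ?thesis using that g by blast
next
  case False
  have \<alpha>: "\<alpha> \<in> Con A F" and \<beta>: "\<beta> \<in> Con A F" using prime_quotient_Con[OF pq] by auto
  obtain e where e: "e \<in> upoly A F" "idempotent_on A e" "separates e \<alpha> \<beta>"
    "e ` A \<in> minimal_sets A F \<alpha> \<beta>"
    using prime_quotient_minimal_idempotent[OF algebra fin pq] by blast
  define a where "a = g z"
  have a: "a \<in> A" "(a, z) \<in> \<beta>" "(a, z) \<notin> \<alpha>"
    unfolding a_def using upoly_closed[OF algebra g(1) z] g_\<beta> z False by auto
  obtain t where t: "t \<in> upoly A F" "(e (t a), e (t z)) \<notin> \<alpha>"
    using separates_prime_quotient_pair[OF algebra pq e(1,3) a(2,3)] by blast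
  have et: "(\<lambda>x. e (t x)) \<in> upoly A F" using upoly_comp[OF e(1) t(1)] .
  obtain p where p: "p \<in> upoly A F" "(a, p (e (t a))) \<in> \<alpha>" "(p (e (t z)), z) \<in> \<alpha>"
    using prime_quotient_poly_linked[OF pq upoly_cong[OF algebra \<beta> et a(2)] t(2) a(2)] by blast
  define u where "u x = p (e (t x))" for x
  have u: "u \<in> upoly A F" unfolding u_def using upoly_comp[OF p(1) et] .
  have "(\<lambda>x. t (m [a, g x, x])) \<in> upoly A F"
    using upoly_comp[OF t(1) upoly_subst3[OF maltsev_poly upoly_const[OF a(1)] g(1) upoly_id]] .
  moreover have "e ` A \<in> prime_minimal_sets A F" unfolding prime_minimal_sets_def using e(4) pq by blast
  ultimately have b: "(\<lambda>x. e (t (m [a, g x, x]))) \<in> nbhd_maps A F (prime_minimal_sets A F)"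
    unfolding nbhd_maps_def using e(1,2)
    by (intro CollectI exI[of _ e] exI[of _ "\<lambda>x. t (m [a, g x, x])"]) simp
  have ua: "u a \<in> A" using upoly_closed[OF algebra u a(1)] .
  show ?thesis
  proof (rule that[of "\<lambda>x. m [g x, u a, u (m [a, g x, x])]"])
    show "(\<lambda>x. m [g x, u a, u (m [a, g x, x])]) \<in> upoly A F"
      by (intro upoly_subst3 maltsev_poly g(1) upoly_const[OF ua] upoly_comp[OF u] upoly_id
          upoly_const[OF a(1)])
    show "poly_generated A F (nbhd_maps A F (prime_minimal_sets A F)) (\<lambda>x. m [g x, u a, u (m [a, g x, x])])"
      unfolding u_def
      by (rule poly_generated_subst3[OF maltsev_poly g(2) poly_generated_const[OF ua[unfolded u_def]]
            poly_generated_upoly[OF poly_generated_basic[OF b] p(1)]])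
    show "(m [g x, u a, u (m [a, g x, x])], x) \<in> \<gamma>"
      if "\<gamma> \<in> Con A F" "x \<in> A" "(g x, x) \<in> \<gamma>" for \<gamma> x
      using maltsev_correction_cong[OF that(1) u a(1) that(2,3)] .
    have "(a, u a) \<in> \<alpha>" "(u z, z) \<in> \<alpha>" using p(2,3) unfolding u_def by auto
    then show "(m [g z, u a, u (m [a, g z, z])], z) \<in> \<alpha>"
      unfolding a_def[symmetric] by (rule maltsev_correction_fixes[OF \<alpha> z])
  qed
qed

lemma prime_quotient_refine:
  assumes fin: "finite A" and pq: "prime_quotient A F \<alpha> \<beta>"
    and g: "g \<in> upoly A F" "poly_generated A F (nbhd_maps A F (prime_minimal_sets A F)) g"
    and g_\<beta>: "\<forall>x\<in>A. (g x, x) \<in> \<beta>"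
  obtains g' where "g' \<in> upoly A F" "poly_generated A F (nbhd_maps A F (prime_minimal_sets A F)) g'"
    "\<forall>x\<in>A. (g' x, x) \<in> \<alpha>"
proof -
  have "\<exists>g'. g' \<in> upoly A F \<and> poly_generated A F (nbhd_maps A F (prime_minimal_sets A F)) g' \<and>
      (\<forall>x\<in>A. (g' x, x) \<in> \<beta>) \<and> (\<forall>x\<in>S. (g' x, x) \<in> \<alpha>)" if "S \<subseteq> A" for S
    using finite_subset[OF that fin] that
  proof (induction S rule: finite_induct)
    case empty
    then show ?case using g g_\<beta> by blast
  next
    case (insert z S)
    then obtain h where h: "h \<in> upoly A F" "poly_generated A F (nbhd_maps A F (prime_minimal_sets A F)) h"
      "\<forall>x\<in>A. (h x, x) \<in> \<beta>" "\<forall>x\<in>S. (h x, x) \<in> \<alpha>"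
      by blast
    obtain h' where h': "h' \<in> upoly A F"
      "poly_generated A F (nbhd_maps A F (prime_minimal_sets A F)) h'"
      "\<And>\<gamma> x. \<gamma> \<in> Con A F \<Longrightarrow> x \<in> A \<Longrightarrow> (h x, x) \<in> \<gamma> \<Longrightarrow> (h' x, x) \<in> \<gamma>" "(h' z, z) \<in> \<alpha>"
      using prime_quotient_correct_point[OF fin pq h(1-3)] insert.prems by blast
    have "\<forall>x\<in>A. (h' x, x) \<in> \<beta>" using h'(3) h(3) prime_quotient_Con[OF pq] by blast
    moreover have "\<forall>x\<in>insert z S. (h' x, x) \<in> \<alpha>"
      using h'(3,4) h(4) prime_quotient_Con[OF pq] insert.prems by blast
    ultimately show ?case using h'(1,2) by blast
  qed
  then show ?thesis using that by blast
qed

lemma Con_generated_approx: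
  assumes fin: "finite A"
  shows "\<gamma> \<in> Con A F \<Longrightarrow> \<exists>g. g \<in> upoly A F \<and>
    poly_generated A F (nbhd_maps A F (prime_minimal_sets A F)) g \<and> (\<forall>x\<in>A. (g x, x) \<in> \<gamma>)"
proof (induction "card (A \<times> A - \<gamma>)" arbitrary: \<gamma> rule: less_induct)
  case less
  show ?case
  proof (cases "\<gamma> = A \<times> A")
    case True
    obtain a where "a \<in> A" using algebra unfolding algebra_def by blast
    then show ?thesis
      using True by (intro exI[of _ "\<lambda>_. a"]) (auto intro: upoly_const poly_generated_const)
  next
    case False
    obtain \<beta> where pq: "prime_quotient A F \<gamma> \<beta>"
      using Con_has_prime_quotient_above[OF algebra fin less.prems False] by blast
    have "A \<times> A - \<beta> \<subset> A \<times> A - \<gamma>"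
      using prime_quotient_Con(2,3)[OF pq] Con_subset[of \<beta> A F] by auto
    then have "card (A \<times> A - \<beta>) < card (A \<times> A - \<gamma>)" by (rule psubset_card_mono[rotated]) (simp add: fin)
    from less.hyps[OF this prime_quotient_Con(2)[OF pq]]
    obtain h where "h \<in> upoly A F" "poly_generated A F (nbhd_maps A F (prime_minimal_sets A F)) h"
      "\<forall>x\<in>A. (h x, x) \<in> \<beta>"
      by blast
    then obtain g where "g \<in> upoly A F" "poly_generated A F (nbhd_maps A F (prime_minimal_sets A F)) g"
      "\<forall>x\<in>A. (g x, x) \<in> \<gamma>"
      by (rule prime_quotient_refine[OF fin pq])
    then show ?thesis by blast
  qed
qed

lemma covers_prime_minimal_sets:
  assumes "finite A"
  shows "covers A F (prime_minimal_sets A F) {A}"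
proof -
  obtain g where "poly_generated A F (nbhd_maps A F (prime_minimal_sets A F)) g"
    "\<forall>x\<in>A. (g x, x) \<in> Id_on A"
    using Con_generated_approx[OF assms Con_Id_on[OF algebra]] by blast
  then show ?thesis by (auto intro: covers_if_poly_generated_id)
qed

end

theorem theorem5p4:
  fixes A :: "'a set" and F :: "(nat \<times> ('a list \<Rightarrow> 'a)) set"
  assumes "algebra A F" and "finite A" and "has_maltsev A F"
  shows "covers A F (\<Union>{minimal_sets A F \<alpha> \<beta> | \<alpha> \<beta>. prime_quotient A F \<alpha> \<beta>}) {A}"
proof -
  obtain m where "m \<in> poly A F 3" "\<forall>x\<in>A. \<forall>y\<in>A. m [x, y, y] = x \<and> m [y, y, x] = x"
    using assms(3) unfolding has_maltsev_def by blast
  then interpret maltsev_algebra A F m using assms(1) by unfold_locales auto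
  show ?thesis using covers_prime_minimal_sets[OF assms(2)] unfolding prime_minimal_sets_def .
qed

end
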